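(* Let $f_1(x)=\frac25x$ for $x<0$ and $f_1(x)=\frac15x$ for $x\ge0$, let $f_2(x)=\frac13x$, and for $\varepsilon>0$ let $\widehat f_{2}(x)=\frac13x+\varepsilon$. Consider the CPLIFSs $\mathcal{F}=\{f_1,f_2\}$ and $\widehat{\mathcal{F}}_\varepsilon=\{f_1,\widehat f_2\}$. Let $s_0$ be the unique $s>0$ with $(1/3)^s+(1/5)^s=1$. Then for every $\varepsilon>0$ the natural dimension of $\widehat{\mathcal{F}}_\varepsilon$ equals $s_0$, while the natural dimension of $\mathcal{F}$ is strictly larger than $s_0$. In particular the natural dimension of $\widehat{\mathcal F}_\varepsilon$ does not converge to that of $\mathcal F$ as $\varepsilon\to0$.
   Context: For a CPLIFS (finite family $\{f_k\}_{k=1}^m$ of continuous piecewise linear contractions of $\mathbb{R}$ with nonzero slopes of absolute value $<1$ and finitely many breaking points), let $I$ be the smallest nonempty compact interval with $f_k(I)\subset I$ for all $k$; if the attractor (the unique nonempty compact $\Lambda=\bigcup_kf_k(\Lambda)$) is a single point $\phi$ (e.g. a common fixed point), set $I=[\phi-\frac12,\phi+\frac12]$. The natural pressure is $\Phi(s)=\limsup_{n\to\infty}\frac1n\log\sum_{(i_1,\dots,i_n)\in[m]^n}|f_{i_1}\circ\dots\circ f_{i_n}(I)|^s$; it is strictly decreasing with $\Phi(0)>0$ and $\Phi(s)\to-\infty$, and the natural dimension is its unique zero. *)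

theory Defs
  imports "HOL-Analysis.Analysis"
begin

text \<open>A CPLIFS is represented as a list of maps fs = [f_1, ..., f_m] (indexed 0..m-1).\<close>

definition attractor :: "(real \<Rightarrow> real) list \<Rightarrow> real set" where
  "attractor fs = (THE L. L \<noteq> {} \<and> compact L \<and> L = (\<Union>f\<in>set fs. f ` L))"

definition inv_interval :: "(real \<Rightarrow> real) list \<Rightarrow> real set \<Rightarrow> bool" where
  "inv_interval fs J \<longleftrightarrow> (\<exists>a b. a \<le> b \<and> J = {a..b}) \<and> (\<forall>f\<in>set fs. f ` J \<subseteq> J)"

definition cplifs_I :: "(real \<Rightarrow> real) list \<Rightarrow> real set" where
  "cplifs_I fs =
     (if \<exists>p. attractor fs = {p}
      then (let p = (THE p. attractor fs = {p}) in {p - 1/2 .. p + 1/2})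
      else (THE I. inv_interval fs I \<and> (\<forall>J. inv_interval fs J \<longrightarrow> I \<subseteq> J)))"

definition word_map :: "(real \<Rightarrow> real) list \<Rightarrow> nat list \<Rightarrow> real \<Rightarrow> real" where
  "word_map fs w = foldr (\<lambda>i g. (fs ! i) \<circ> g) w id"

definition words :: "nat \<Rightarrow> nat \<Rightarrow> nat list set" where
  "words m n = {w. length w = n \<and> set w \<subseteq> {..<m}}"

definition nat_pressure :: "(real \<Rightarrow> real) list \<Rightarrow> real \<Rightarrow> ereal" where
  "nat_pressure fs s = limsup (\<lambda>n. ereal ((1 / real n) *
      ln (\<Sum>w\<in>words (length fs) n. diameter (word_map fs w ` cplifs_I fs) powr s)))"

definition natural_dim :: "(real \<Rightarrow> real) list \<Rightarrow> real" where
  "natural_dim fs = (THE s. nat_pressure fs s = 0)"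

end

theory Submission
  imports Defs
begin

(*
  For the perturbed system the interval I = [0, 3\<epsilon>/2] lies in the half-line where f1 is
  x/5, so each cylinder image of I is an interval of length (3\<epsilon>/2) times the product of the
  ratios 1/5, 1/3 along the word; the pressure is ln ((1/5)^s + (1/3)^s), with zero s0.
  Without the shift the attractor is {0} and I = [-1/2, 1/2]; the cylinder images have
  length between one half and one times the product of the ratios 2/5, 1/3, which are the
  exact slopes on the negative half-line and Lipschitz bounds everywhere. The pressure is
  then ln ((2/5)^s + (1/3)^s), whose zero lies strictly above s0.
*)

lemma word_map_Nil [simp]: "word_map fs [] = id"
  by (simp add: word_map_def)

lemma word_map_Cons [simp]: "word_map fs (i # w) = (fs ! i) \<circ> word_map fs w"
  by (simp add: word_map_def)

lemma words_Suc: "words m (Suc n) = (\<lambda>(i, w). i # w) ` ({..<m} \<times> words m n)"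
proof
  show "words m (Suc n) \<subseteq> (\<lambda>(i, w). i # w) ` ({..<m} \<times> words m n)"
  proof
    fix x assume "x \<in> words m (Suc n)"
    then obtain i w where "x = i # w" "i < m" "w \<in> words m n"
      by (cases x) (auto simp: words_def)
    then show "x \<in> (\<lambda>(i, w). i # w) ` ({..<m} \<times> words m n)" by force
  qed
qed (auto simp: words_def)

lemma sum_words_prod_list:
  fixes g :: "nat \<Rightarrow> 'a :: comm_semiring_1"
  shows "(\<Sum>w\<in>words m n. prod_list (map g w)) = (\<Sum>i<m. g i) ^ n"
proof (induction n)
  case 0
  have "words m 0 = {[]}" by (auto simp: words_def)
  then show ?case by simp
next
  case (Suc n)
  have inj: "inj_on (\<lambda>(i, w). i # w) ({..<m} \<times> words m n)" by (auto simp: inj_on_def)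
  have "(\<Sum>w\<in>words m (Suc n). prod_list (map g w))
      = (\<Sum>i<m. \<Sum>w\<in>words m n. g i * prod_list (map g w))"
    unfolding words_Suc sum.reindex[OF inj] sum.cartesian_product by (simp add: split_def)
  also have "\<dots> = (\<Sum>i<m. g i) * (\<Sum>w\<in>words m n. prod_list (map g w))"
    by (rule sum_product[symmetric])
  finally show ?case using Suc by simp
qed

lemma prod_list_pos:
  fixes g :: "nat \<Rightarrow> 'a :: linordered_semidom"
  assumes "\<And>i. i \<in> set w \<Longrightarrow> 0 < g i"
  shows "0 < prod_list (map g w)"
  using assms by (induction w) auto

lemma prod_list_powr:
  fixes g :: "nat \<Rightarrow> real"
  assumes "\<And>i. i \<in> set w \<Longrightarrow> 0 < g i"
  shows "prod_list (map g w) powr s = prod_list (map (\<lambda>i. g i powr s) w)"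
  using assms
proof (induction w)
  case (Cons i w)
  then have "0 < prod_list (map g w)" by (intro prod_list_pos) auto
  with Cons show ?case by (simp add: powr_mult less_imp_le)
qed simp

lemma word_map_mem:
  assumes "\<And>i. i < length fs \<Longrightarrow> (fs ! i) ` J \<subseteq> J"
    and "set w \<subseteq> {..<length fs}" "x \<in> J"
  shows "word_map fs w x \<in> J"
  using assms(2) by (induction w) (use assms in auto)

lemma word_map_dist_bounds:
  assumes inv: "\<And>i. i < length fs \<Longrightarrow> (fs ! i) ` J \<subseteq> J"
    and bounds: "\<And>i x y. i < length fs \<Longrightarrow> x \<in> J \<Longrightarrow> y \<in> J \<Longrightarrow>
        l i * \<bar>x - y\<bar> \<le> \<bar>(fs ! i) x - (fs ! i) y\<bar> \<and> \<bar>(fs ! i) x - (fs ! i) y\<bar> \<le> L i * \<bar>x - y\<bar>"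
    and nonneg: "\<And>i. i < length fs \<Longrightarrow> 0 \<le> l i \<and> 0 \<le> L i"
    and w: "set w \<subseteq> {..<length fs}" and "x \<in> J" "y \<in> J"
  shows "prod_list (map l w) * \<bar>x - y\<bar> \<le> \<bar>word_map fs w x - word_map fs w y\<bar>
       \<and> \<bar>word_map fs w x - word_map fs w y\<bar> \<le> prod_list (map L w) * \<bar>x - y\<bar>"
  using w
proof (induction w)
  case (Cons i w)
  let ?d = "\<bar>word_map fs w x - word_map fs w y\<bar>"
  have i: "i < length fs" and IH: "prod_list (map l w) * \<bar>x - y\<bar> \<le> ?d \<and> ?d \<le> prod_list (map L w) * \<bar>x - y\<bar>"
    using Cons by auto
  have "word_map fs w x \<in> J" "word_map fs w y \<in> J"
    using word_map_mem[OF inv] Cons.prems \<open>x \<in> J\<close> \<open>y \<in> J\<close> by auto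
  then have step: "l i * ?d \<le> \<bar>word_map fs (i # w) x - word_map fs (i # w) y\<bar>
      \<and> \<bar>word_map fs (i # w) x - word_map fs (i # w) y\<bar> \<le> L i * ?d"
    using bounds[OF i] by simp
  have "l i * (prod_list (map l w) * \<bar>x - y\<bar>) \<le> l i * ?d"
    using IH nonneg[OF i] by (intro mult_left_mono) auto
  moreover have "L i * ?d \<le> L i * (prod_list (map L w) * \<bar>x - y\<bar>)"
    using IH nonneg[OF i] by (intro mult_left_mono) auto
  ultimately show ?case using step by (simp add: mult.assoc)
qed simp

lemma diameter_image_interval_bounds:
  fixes g :: "real \<Rightarrow> real"
  assumes lip: "\<And>x y. x \<in> {a..b} \<Longrightarrow> y \<in> {a..b} \<Longrightarrow> \<bar>g x - g y\<bar> \<le> L * \<bar>x - y\<bar>"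
    and "0 \<le> L" and x: "x \<in> {a..b}" and y: "y \<in> {a..b}"
  shows "\<bar>g x - g y\<bar> \<le> diameter (g ` {a..b}) \<and> diameter (g ` {a..b}) \<le> L * (b - a)"
proof
  have "L-lipschitz_on {a..b} g"
    using lip \<open>0 \<le> L\<close> by (intro lipschitz_onI) (auto simp: dist_real_def)
  then have "compact (g ` {a..b})"
    by (intro compact_continuous_image lipschitz_on_continuous_on) auto
  then show "\<bar>g x - g y\<bar> \<le> diameter (g ` {a..b})"
    using diameter_bounded_bound[of "g ` {a..b}" "g x" "g y"] x y
    by (auto simp: compact_imp_bounded dist_real_def)
  have "\<bar>g u - g v\<bar> \<le> L * (b - a)" if "u \<in> {a..b}" "v \<in> {a..b}" for u v
  proof -
    have "\<bar>u - v\<bar> \<le> b - a" using that by auto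
    then show ?thesis using lip[OF that] \<open>0 \<le> L\<close> by (meson mult_left_mono order_trans)
  qed
  then show "diameter (g ` {a..b}) \<le> L * (b - a)"
    using x by (intro diameter_le) auto
qed

lemma powr_bounds_of_bounds:
  fixes c C p d s :: real
  assumes "0 < c" "0 < p" "c * p \<le> d" "d \<le> C * p"
  shows "min (c powr s) (C powr s) * p powr s \<le> d powr s
       \<and> d powr s \<le> max (c powr s) (C powr s) * p powr s"
proof -
  define k where "k = d / p"
  have k: "c \<le> k" "k \<le> C" using assms by (auto simp: k_def field_simps)
  have "d powr s = k powr s * p powr s"
    using assms k by (simp add: k_def powr_mult[symmetric])
  moreover have "min (c powr s) (C powr s) \<le> k powr s \<and> k powr s \<le> max (c powr s) (C powr s)"
  proof (cases "0 \<le> s")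
    case True
    then have "c powr s \<le> k powr s" "k powr s \<le> C powr s"
      using k assms by (auto intro!: powr_mono2)
    then show ?thesis by linarith
  next
    case False
    then have "k powr s \<le> c powr s" "C powr s \<le> k powr s"
      using k assms by (auto intro!: powr_mono2')
    then show ?thesis by linarith
  qed
  ultimately show ?thesis by (auto intro: mult_right_mono)
qed

lemma limsup_ln_over_n_eq:
  fixes S :: "nat \<Rightarrow> real"
  assumes "0 < C1" "0 < C2" "0 < B"
    and bounds: "\<And>n. C1 * B ^ n \<le> S n \<and> S n \<le> C2 * B ^ n"
  shows "limsup (\<lambda>n. ereal (1 / real n * ln (S n))) = ereal (ln B)"
proof -
  have ln_bounds: "ln C1 + real n * ln B \<le> ln (S n) \<and> ln (S n) \<le> ln C2 + real n * ln B" for n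
  proof -
    have "0 < C1 * B ^ n" using assms by simp
    then have "ln (C1 * B ^ n) \<le> ln (S n) \<and> ln (S n) \<le> ln (C2 * B ^ n)"
      using bounds[of n] by simp
    then show ?thesis using assms by (simp add: ln_mult ln_realpow)
  qed
  have "eventually (\<lambda>n. ln C1 / real n + ln B \<le> 1 / real n * ln (S n)
      \<and> 1 / real n * ln (S n) \<le> ln C2 / real n + ln B) sequentially"
    using eventually_gt_at_top[of 0]
  proof eventually_elim
    case (elim n)
    then have "(ln C1 + real n * ln B) / real n \<le> ln (S n) / real n
        \<and> ln (S n) / real n \<le> (ln C2 + real n * ln B) / real n"
      using ln_bounds[of n] by (simp add: divide_right_mono)
    then show ?case using elim by (simp add: add_divide_distrib)
  qed
  then have lower: "eventually (\<lambda>n. ln C1 / real n + ln B \<le> 1 / real n * ln (S n)) sequentially"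
    and upper: "eventually (\<lambda>n. 1 / real n * ln (S n) \<le> ln C2 / real n + ln B) sequentially"
    by (simp_all add: eventually_conj_iff)
  have lim: "(\<lambda>n. ln C / real n + ln B) \<longlonglongrightarrow> ln B" for C
    using tendsto_add[OF lim_const_over_n tendsto_const] by simp
  have "(\<lambda>n. 1 / real n * ln (S n)) \<longlonglongrightarrow> ln B"
    by (rule tendsto_sandwich[OF lower upper lim lim])
  then show ?thesis
    by (intro lim_imp_Limsup tendsto_ereal) auto
qed

lemma nat_pressure_eq_ln_sum_powr:
  assumes "fs \<noteq> []" and r: "\<And>i. i < length fs \<Longrightarrow> 0 < r i" and "0 < c" "c \<le> C"
    and diam: "\<And>n w. w \<in> words (length fs) n \<Longrightarrow>
      c * prod_list (map r w) \<le> diameter (word_map fs w ` cplifs_I fs)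
      \<and> diameter (word_map fs w ` cplifs_I fs) \<le> C * prod_list (map r w)"
  shows "nat_pressure fs s = ereal (ln (\<Sum>i<length fs. r i powr s))"
proof -
  define lo where "lo = min (c powr s) (C powr s)"
  define hi where "hi = max (c powr s) (C powr s)"
  define B where "B = (\<Sum>i<length fs. r i powr s)"
  define T where "T w = prod_list (map (\<lambda>i. r i powr s) w)" for w
  have bounds_pos: "0 < lo" "0 < hi" using \<open>0 < c\<close> \<open>c \<le> C\<close> by (auto simp: lo_def hi_def less_max_iff_disj)
  have B_pos: "0 < B" unfolding B_def using assms(1) r by (intro sum_pos) force+
  have term_bounds: "lo * T w \<le> diameter (word_map fs w ` cplifs_I fs) powr s
      \<and> diameter (word_map fs w ` cplifs_I fs) powr s \<le> hi * T w"
    if w: "w \<in> words (length fs) n" for n w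
  proof -
    have r_w: "\<And>i. i \<in> set w \<Longrightarrow> 0 < r i" using r w by (auto simp: words_def)
    then have "0 < prod_list (map r w)" and "T w = prod_list (map r w) powr s"
      unfolding T_def by (simp_all add: prod_list_pos prod_list_powr)
    then show ?thesis
      unfolding lo_def hi_def using powr_bounds_of_bounds[OF \<open>0 < c\<close>] diam[OF w] by presburger
  qed
  have "lo * B ^ n \<le> (\<Sum>w\<in>words (length fs) n. diameter (word_map fs w ` cplifs_I fs) powr s)
      \<and> (\<Sum>w\<in>words (length fs) n. diameter (word_map fs w ` cplifs_I fs) powr s) \<le> hi * B ^ n"
    for n
  proof -
    have sum_T: "(\<Sum>w\<in>words (length fs) n. T w) = B ^ n"
      unfolding T_def B_def by (rule sum_words_prod_list)
    have "lo * B ^ n = (\<Sum>w\<in>words (length fs) n. lo * T w)"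
      by (simp add: sum_T sum_distrib_left[symmetric])
    also have "\<dots> \<le> (\<Sum>w\<in>words (length fs) n. diameter (word_map fs w ` cplifs_I fs) powr s)"
      using term_bounds by (intro sum_mono) blast
    finally show ?thesis
      using term_bounds sum_mono[of "words (length fs) n" _ "\<lambda>w. hi * T w"]
      by (simp add: sum_T sum_distrib_left[symmetric])
  qed
  then show ?thesis
    unfolding nat_pressure_def B_def[symmetric]
    by (rule limsup_ln_over_n_eq[OF bounds_pos B_pos])
qed

lemma sum_powr_strict_antimono:
  fixes r :: "'i \<Rightarrow> real"
  assumes "finite A" "A \<noteq> {}" "\<And>i. i \<in> A \<Longrightarrow> 0 < r i \<and> r i < 1" "s < t"
  shows "(\<Sum>i\<in>A. r i powr t) < (\<Sum>i\<in>A. r i powr s)"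
  using assms by (intro sum_strict_mono powr_less_mono') auto

lemma natural_dim_eqI:
  assumes pressure: "\<And>s. nat_pressure fs s = ereal (ln (\<Sum>i<length fs. r i powr s))"
    and "fs \<noteq> []" and r: "\<And>i. i < length fs \<Longrightarrow> 0 < r i \<and> r i < 1"
    and root: "(\<Sum>i<length fs. r i powr s1) = 1"
  shows "natural_dim fs = s1"
  unfolding natural_dim_def
proof (rule the_equality)
  show "nat_pressure fs s1 = 0" using pressure root by (simp add: zero_ereal_def)
next
  fix s assume "nat_pressure fs s = 0"
  moreover have "0 < (\<Sum>i<length fs. r i powr s)"
    using \<open>fs \<noteq> []\<close> r by (intro sum_pos) force+
  ultimately have "(\<Sum>i<length fs. r i powr s) = 1"
    using pressure by (simp add: zero_ereal_def)
  then show "s = s1"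
    using sum_powr_strict_antimono[of "{..<length fs}" r s s1]
      sum_powr_strict_antimono[of "{..<length fs}" r s1 s] \<open>fs \<noteq> []\<close> r root
    by (cases s s1 rule: linorder_cases) auto
qed

lemma invariant_sets_approx:
  fixes fs :: "(real \<Rightarrow> real) list"
  assumes lip: "\<And>f. f \<in> set fs \<Longrightarrow> c-lipschitz_on UNIV f"
    and L1: "L1 = (\<Union>f\<in>set fs. f ` L1)"
    and L2: "L2 \<noteq> {}" "L2 = (\<Union>f\<in>set fs. f ` L2)"
    and bounded: "bounded (L1 \<union> L2)"
  shows "\<forall>x\<in>L1. \<exists>y\<in>L2. dist x y \<le> c ^ n * diameter (L1 \<union> L2)"
proof (induction n)
  case 0
  obtain y where "y \<in> L2" using L2 by auto
  then show ?case using diameter_bounded_bound[OF bounded] by auto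
next
  case (Suc n)
  show ?case
  proof
    fix x assume "x \<in> L1"
    then obtain f x' where f: "f \<in> set fs" "x' \<in> L1" "x = f x'" using L1 by blast
    then obtain y' where y': "y' \<in> L2" "dist x' y' \<le> c ^ n * diameter (L1 \<union> L2)"
      using Suc by blast
    have "f y' \<in> L2" using L2(2) f y' by blast
    moreover have "dist x (f y') \<le> c * dist x' y'"
      using lipschitz_onD[OF lip[OF f(1)]] f by simp
    moreover have "c * dist x' y' \<le> c * (c ^ n * diameter (L1 \<union> L2))"
      using y' lipschitz_on_nonneg[OF lip[OF f(1)]] by (intro mult_left_mono)
    ultimately show "\<exists>y\<in>L2. dist x y \<le> c ^ Suc n * diameter (L1 \<union> L2)"
      by (metis mult.assoc order_trans power_Suc)
  qed
qed

lemma attractor_subset: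
  fixes fs :: "(real \<Rightarrow> real) list"
  assumes lip: "\<And>f. f \<in> set fs \<Longrightarrow> c-lipschitz_on UNIV f" and "c < 1"
    and L1: "compact L1" "L1 = (\<Union>f\<in>set fs. f ` L1)"
    and L2: "L2 \<noteq> {}" "compact L2" "L2 = (\<Union>f\<in>set fs. f ` L2)"
  shows "L1 \<subseteq> L2"
proof
  fix x assume x: "x \<in> L1"
  let ?D = "diameter (L1 \<union> L2)"
  have approx: "\<forall>x\<in>L1. \<exists>y\<in>L2. dist x y \<le> c ^ n * ?D" for n
    using L1 L2 compact_imp_bounded by (intro invariant_sets_approx[OF lip]) auto
  have "0 \<le> c"
    using x L1(2) lipschitz_on_nonneg[OF lip] by blast
  then have "(\<lambda>n. c ^ n * ?D) \<longlonglongrightarrow> 0"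
    using \<open>c < 1\<close> by (intro tendsto_mult_left_zero LIMSEQ_power_zero) auto
  have "x \<in> closure L2"
    unfolding closure_approachable
  proof (intro allI impI)
    fix e :: real assume "0 < e"
    have "eventually (\<lambda>n. c ^ n * ?D < e) sequentially"
      using order_tendstoD(2)[OF \<open>(\<lambda>n. c ^ n * ?D) \<longlonglongrightarrow> 0\<close> \<open>0 < e\<close>] .
    then obtain n where "c ^ n * ?D < e" by (auto simp: eventually_sequentially)
    then show "\<exists>y\<in>L2. dist y x < e"
      using approx[of n] x by (force simp: dist_commute)
  qed
  then show "x \<in> L2" using L2(2) by (simp add: compact_imp_closed closure_closed)
qed

lemma attractor_eqI:
  fixes fs :: "(real \<Rightarrow> real) list"
  assumes lip: "\<And>f. f \<in> set fs \<Longrightarrow> c-lipschitz_on UNIV f" and "c < 1"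
    and L: "L \<noteq> {}" "compact L" "L = (\<Union>f\<in>set fs. f ` L)"
  shows "attractor fs = L"
  unfolding attractor_def
proof (rule the_equality)
  fix L' assume "L' \<noteq> {} \<and> compact L' \<and> L' = (\<Union>f\<in>set fs. f ` L')"
  then show "L' = L"
    using attractor_subset[OF lip \<open>c < 1\<close>] L by (metis subset_antisym)
qed (use L in auto)

lemma orbit_eq_Union_image:
  assumes "h \<in> set fs" "h z = z"
  shows "{word_map fs w z | w. set w \<subseteq> {..<length fs}}
    = (\<Union>f\<in>set fs. f ` {word_map fs w z | w. set w \<subseteq> {..<length fs}})"
    (is "?S = _")
proof
  show "?S \<subseteq> (\<Union>f\<in>set fs. f ` ?S)"
  proof
    fix y assume "y \<in> ?S"
    then obtain w where w: "set w \<subseteq> {..<length fs}" "y = word_map fs w z" by blast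
    show "y \<in> (\<Union>f\<in>set fs. f ` ?S)"
    proof (cases w)
      case Nil
      then have "y = h z" "z \<in> ?S" using w assms by (auto intro: exI[of _ "[]"])
      then show ?thesis using assms(1) by blast
    next
      case (Cons i w')
      then have "y = (fs ! i) (word_map fs w' z)" "word_map fs w' z \<in> ?S" "fs ! i \<in> set fs"
        using w by auto
      then show ?thesis by blast
    qed
  qed
  show "(\<Union>f\<in>set fs. f ` ?S) \<subseteq> ?S"
  proof (intro UN_least image_subsetI)
    fix f y assume "f \<in> set fs" "y \<in> ?S"
    then obtain i w where "i < length fs" "f = fs ! i" "set w \<subseteq> {..<length fs}"
      "y = word_map fs w z"
      by (auto simp: in_set_conv_nth)
    then show "f y \<in> ?S" by (auto intro!: exI[of _ "i # w"])
  qed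
qed

lemma closure_eq_Union_image_closure:
  fixes fs :: "('a :: heine_borel \<Rightarrow> 'a) list"
  assumes cont: "\<And>f. f \<in> set fs \<Longrightarrow> continuous_on UNIV f"
    and "bounded S" and S: "S = (\<Union>f\<in>set fs. f ` S)"
  shows "closure S = (\<Union>f\<in>set fs. f ` closure S)"
proof
  have "S \<subseteq> (\<Union>f\<in>set fs. f ` S)"
    using S by (rule equalityD1)
  also have "\<dots> \<subseteq> (\<Union>f\<in>set fs. f ` closure S)"
    by (intro UN_mono order_refl image_mono closure_subset)
  finally have "S \<subseteq> (\<Union>f\<in>set fs. f ` closure S)" .
  moreover have "compact (\<Union>f\<in>set fs. f ` closure S)"
    using cont \<open>bounded S\<close>
    by (intro compact_UN finite_set compact_continuous_image)
      (auto intro: continuous_on_subset simp: compact_closure)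
  ultimately show "closure S \<subseteq> (\<Union>f\<in>set fs. f ` closure S)"
    by (intro closure_minimal compact_imp_closed)
  have "f ` closure S \<subseteq> closure (f ` S)" if "f \<in> set fs" for f
    using continuous_image_closure_subset[OF cont[OF that]] by blast
  moreover have "closure (f ` S) \<subseteq> closure S" if "f \<in> set fs" for f
    using that S by (intro closure_mono) blast
  ultimately show "(\<Union>f\<in>set fs. f ` closure S) \<subseteq> closure S" by blast
qed

text \<open>As the attractor is defined by THE, identifying it needs an explicit candidate satisfying
  the fixed-point equation; the closure of an orbit is one.\<close>

lemma attractor_eq_closure_orbit:
  fixes fs :: "(real \<Rightarrow> real) list"
  assumes lip: "\<And>f. f \<in> set fs \<Longrightarrow> c-lipschitz_on UNIV f" and "c < 1"
    and J: "compact J" "\<And>i. i < length fs \<Longrightarrow> (fs ! i) ` J \<subseteq> J" "z \<in> J"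
    and fixpoint: "h \<in> set fs" "h z = z"
  shows "attractor fs = closure {word_map fs w z | w. set w \<subseteq> {..<length fs}}"
proof (rule attractor_eqI[OF lip \<open>c < 1\<close>])
  let ?S = "{word_map fs w z | w. set w \<subseteq> {..<length fs}}"
  have "z \<in> ?S" by (auto intro: exI[of _ "[]"])
  then show "closure ?S \<noteq> {}" using closure_subset by blast
  have "?S \<subseteq> J" using word_map_mem[OF J(2)] J(3) by blast
  then have "bounded ?S" using J(1) compact_imp_bounded bounded_subset by blast
  then show "compact (closure ?S)" by (simp add: compact_closure)
  show "closure ?S = (\<Union>f\<in>set fs. f ` closure ?S)"
    using lipschitz_on_continuous_on[OF lip] \<open>bounded ?S\<close> orbit_eq_Union_image[OF fixpoint]
    by (rule closure_eq_Union_image_closure)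
qed

abbreviation f1 :: "real \<Rightarrow> real" where
  "f1 \<equiv> \<lambda>x. if x < 0 then 2/5 * x else 1/5 * x"

abbreviation f2 :: "real \<Rightarrow> real" where
  "f2 \<equiv> \<lambda>x. 1/3 * x"

abbreviation f2_shift :: "real \<Rightarrow> real \<Rightarrow> real" where
  "f2_shift \<epsilon> \<equiv> \<lambda>x. 1/3 * x + \<epsilon>"

lemma lipschitz_f1: "(1/2)-lipschitz_on UNIV f1"
  by (intro lipschitz_onI) (auto simp: dist_real_def abs_if)

lemma lipschitz_f2: "(1/2)-lipschitz_on UNIV f2"
  by (intro lipschitz_onI) (auto simp: dist_real_def abs_if)

lemma lipschitz_f2_shift: "(1/2)-lipschitz_on UNIV (f2_shift \<epsilon>)"
  by (intro lipschitz_onI) (auto simp: dist_real_def abs_if)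

lemma perturbed_maps_into:
  assumes "0 < \<epsilon>" "i < length [f1, f2_shift \<epsilon>]"
  shows "([f1, f2_shift \<epsilon>] ! i) ` {0..3*\<epsilon>/2} \<subseteq> {0..3*\<epsilon>/2}"
  using assms by (auto simp: less_Suc_eq nth_Cons')

lemma perturbed_maps_scale:
  assumes "i < length [f1, f2_shift \<epsilon>]" "0 \<le> x" "0 \<le> y"
  shows "\<bar>([f1, f2_shift \<epsilon>] ! i) x - ([f1, f2_shift \<epsilon>] ! i) y\<bar> = [1/5, 1/3] ! i * \<bar>x - y\<bar>"
proof -
  have "i = 0 \<or> i = 1" using assms(1) by auto
  then show ?thesis using assms(2,3) by (auto simp: abs_if)
qed

lemma attractor_perturbed_not_singleton:
  assumes "0 < \<epsilon>"
  shows "\<nexists>p. attractor [f1, f2_shift \<epsilon>] = {p}"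
proof -
  let ?S = "{word_map [f1, f2_shift \<epsilon>] w 0 | w. set w \<subseteq> {..<length [f1, f2_shift \<epsilon>]}}"
  have lip: "(1/2)-lipschitz_on UNIV f" if "f \<in> set [f1, f2_shift \<epsilon>]" for f
    using that lipschitz_f1 lipschitz_f2_shift by (simp only: set_simps insert_iff empty_iff) blast
  have "attractor [f1, f2_shift \<epsilon>] = closure ?S"
    by (rule attractor_eq_closure_orbit[where h=f1, OF lip _ _ perturbed_maps_into[OF assms]])
       (simp_all add: less_imp_le[OF assms])
  moreover have "0 \<in> ?S" by (intro CollectI exI[of _ "[]"]) simp
  moreover have "\<epsilon> \<in> ?S" by (intro CollectI exI[of _ "[1]"]) simp
  ultimately have "0 \<in> attractor [f1, f2_shift \<epsilon>]" "\<epsilon> \<in> attractor [f1, f2_shift \<epsilon>]"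
    using closure_subset[of ?S] by (simp_all only: subsetD)
  then show ?thesis
    using assms by auto
qed

lemma cplifs_I_perturbed:
  assumes "0 < \<epsilon>"
  shows "cplifs_I [f1, f2_shift \<epsilon>] = {0..3*\<epsilon>/2}"
proof -
  have inv: "inv_interval [f1, f2_shift \<epsilon>] {0..3*\<epsilon>/2}"
    unfolding inv_interval_def using assms by (auto intro!: exI[of _ 0] exI[of _ "3*\<epsilon>/2"])
  have minimal: "{0..3*\<epsilon>/2} \<subseteq> J" if "inv_interval [f1, f2_shift \<epsilon>] J" for J
  proof -
    from that obtain a b where J: "a \<le> b" "J = {a..b}"
      and into: "\<forall>f\<in>set [f1, f2_shift \<epsilon>]. f ` J \<subseteq> J"
      unfolding inv_interval_def by blast
    have "a \<in> J" "b \<in> J" using J by auto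
    then have "f1 a \<in> J" "f2_shift \<epsilon> b \<in> J"
      using into by (simp_all only: set_simps ball_simps image_subset_iff)
    then have "a \<le> 0" "3*\<epsilon>/2 \<le> b" using J by (auto split: if_splits)
    then show ?thesis using J by auto
  qed
  have "(THE I. inv_interval [f1, f2_shift \<epsilon>] I \<and> (\<forall>J. inv_interval [f1, f2_shift \<epsilon>] J \<longrightarrow> I \<subseteq> J))
      = {0..3*\<epsilon>/2}"
    using inv minimal by (intro the_equality) blast+
  then show ?thesis
    unfolding cplifs_I_def using attractor_perturbed_not_singleton[OF assms] by simp
qed

lemma diameter_perturbed_word_image:
  assumes "0 < \<epsilon>" and w: "w \<in> words (length [f1, f2_shift \<epsilon>]) n"
  shows "diameter (word_map [f1, f2_shift \<epsilon>] w ` cplifs_I [f1, f2_shift \<epsilon>])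
    = 3*\<epsilon>/2 * prod_list (map ((!) [1/5, 1/3]) w)"
proof -
  let ?fs = "[f1, f2_shift \<epsilon>]" and ?r = "(!) [1/5, 1/3 :: real]" and ?J = "{0..3*\<epsilon>/2}"
  let ?g = "word_map ?fs w" and ?p = "prod_list (map ?r w)"
  have scale: "?r i * \<bar>x - y\<bar> \<le> \<bar>(?fs ! i) x - (?fs ! i) y\<bar>
      \<and> \<bar>(?fs ! i) x - (?fs ! i) y\<bar> \<le> ?r i * \<bar>x - y\<bar>"
    if "i < length ?fs" "x \<in> ?J" "y \<in> ?J" for i x y
    using perturbed_maps_scale[of i \<epsilon> x y] that by simp
  have nonneg: "0 \<le> ?r i \<and> 0 \<le> ?r i" if "i < length ?fs" for i
    using that by (auto simp: less_Suc_eq)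
  have w': "set w \<subseteq> {..<length ?fs}" using w by (simp add: words_def)
  have dist: "?p * \<bar>x - y\<bar> \<le> \<bar>?g x - ?g y\<bar> \<and> \<bar>?g x - ?g y\<bar> \<le> ?p * \<bar>x - y\<bar>"
    if "x \<in> ?J" "y \<in> ?J" for x y
    using perturbed_maps_into[OF assms(1)] scale nonneg w' that by (rule word_map_dist_bounds)
  have "0 \<le> ?p" using nonneg w' by (intro prod_list_nonneg) auto
  have ends: "3*\<epsilon>/2 \<in> ?J" "0 \<in> ?J" using assms(1) by auto
  have "\<bar>?g (3*\<epsilon>/2) - ?g 0\<bar> \<le> diameter (?g ` ?J) \<and> diameter (?g ` ?J) \<le> ?p * (3*\<epsilon>/2 - 0)"
    using dist \<open>0 \<le> ?p\<close> ends by (intro diameter_image_interval_bounds) blast+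
  moreover have "\<bar>?g (3*\<epsilon>/2) - ?g 0\<bar> = ?p * (3*\<epsilon>/2)"
    using dist[OF ends] assms(1) by simp
  ultimately show ?thesis
    unfolding cplifs_I_perturbed[OF assms(1)] by (simp add: mult.commute)
qed

lemma natural_dim_perturbed:
  assumes "0 < \<epsilon>" and root: "(1/3) powr s0 + (1/5) powr s0 = 1"
  shows "natural_dim [f1, f2_shift \<epsilon>] = s0"
proof (rule natural_dim_eqI)
  let ?r = "(!) [1/5, 1/3 :: real]"
  show "nat_pressure [f1, f2_shift \<epsilon>] s = ereal (ln (\<Sum>i<length [f1, f2_shift \<epsilon>]. ?r i powr s))" for s
    using diameter_perturbed_word_image[OF assms(1)] assms(1)
    by (intro nat_pressure_eq_ln_sum_powr[where c="3*\<epsilon>/2" and C="3*\<epsilon>/2"]) (auto simp: less_Suc_eq)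
  show "i < length [f1, f2_shift \<epsilon>] \<Longrightarrow> 0 < ?r i \<and> ?r i < 1" for i
    by (auto simp: less_Suc_eq)
  show "(\<Sum>i<length [f1, f2_shift \<epsilon>]. ?r i powr s0) = 1"
    using root by simp
qed simp

lemma cplifs_I_unperturbed: "cplifs_I [f1, f2] = {-1/2..1/2}"
proof -
  have lip: "(1/2)-lipschitz_on UNIV f" if "f \<in> set [f1, f2]" for f
    using that lipschitz_f1 lipschitz_f2 by (simp only: set_simps insert_iff empty_iff) blast
  have attractor: "attractor [f1, f2] = {0}"
    by (rule attractor_eqI[OF lip]) simp_all
  have "(THE p. {0::real} = {p}) = 0" by auto
  then show ?thesis unfolding cplifs_I_def attractor by simp
qed

lemma unperturbed_maps_scale:
  assumes "i < length [f1, f2]"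
  shows "\<bar>([f1, f2] ! i) x - ([f1, f2] ! i) y\<bar> \<le> [2/5, 1/3] ! i * \<bar>x - y\<bar>"
    and "x \<le> 0 \<Longrightarrow> y \<le> 0 \<Longrightarrow> \<bar>([f1, f2] ! i) x - ([f1, f2] ! i) y\<bar> = [2/5, 1/3] ! i * \<bar>x - y\<bar>"
proof -
  have i: "i = 0 \<or> i = 1" using assms by auto
  then show "\<bar>([f1, f2] ! i) x - ([f1, f2] ! i) y\<bar> \<le> [2/5, 1/3] ! i * \<bar>x - y\<bar>"
    by (auto simp: abs_if)
  show "x \<le> 0 \<Longrightarrow> y \<le> 0 \<Longrightarrow> \<bar>([f1, f2] ! i) x - ([f1, f2] ! i) y\<bar> = [2/5, 1/3] ! i * \<bar>x - y\<bar>"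
    using i by (auto simp: abs_if split: if_splits)
qed

lemma unperturbed_word_map_dist_bounds:
  assumes w: "set w \<subseteq> {..<length [f1, f2]}"
  shows "\<bar>word_map [f1, f2] w x - word_map [f1, f2] w y\<bar> \<le> prod_list (map ((!) [2/5, 1/3]) w) * \<bar>x - y\<bar>"
    and "x \<le> 0 \<Longrightarrow> y \<le> 0 \<Longrightarrow>
      \<bar>word_map [f1, f2] w x - word_map [f1, f2] w y\<bar> = prod_list (map ((!) [2/5, 1/3]) w) * \<bar>x - y\<bar>"
proof -
  let ?fs = "[f1, f2]" and ?r = "(!) [2/5, 1/3 :: real]"
  have nonneg: "0 \<le> (0::real) \<and> 0 \<le> ?r i" "0 \<le> ?r i \<and> 0 \<le> ?r i" if "i < length ?fs" for i
    using that by (auto simp: less_Suc_eq)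
  have lipschitz: "0 * \<bar>x - y\<bar> \<le> \<bar>(?fs ! i) x - (?fs ! i) y\<bar>
      \<and> \<bar>(?fs ! i) x - (?fs ! i) y\<bar> \<le> ?r i * \<bar>x - y\<bar>"
    if "i < length ?fs" for i x y
    using unperturbed_maps_scale(1)[OF that] by simp
  show "\<bar>word_map ?fs w x - word_map ?fs w y\<bar> \<le> prod_list (map ?r w) * \<bar>x - y\<bar>"
    using word_map_dist_bounds[where J=UNIV, OF _ lipschitz nonneg(1) w] by auto
  have nonpos_into: "(?fs ! i) ` {..0} \<subseteq> {..0}" if "i < length ?fs" for i
    using that by (auto simp: less_Suc_eq)
  have scale: "?r i * \<bar>x - y\<bar> \<le> \<bar>(?fs ! i) x - (?fs ! i) y\<bar>
      \<and> \<bar>(?fs ! i) x - (?fs ! i) y\<bar> \<le> ?r i * \<bar>x - y\<bar>"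
    if "i < length ?fs" "x \<in> {..0}" "y \<in> {..0}" for i x y
    using unperturbed_maps_scale(2)[OF that(1)] that(2,3) by simp
  show "x \<le> 0 \<Longrightarrow> y \<le> 0 \<Longrightarrow>
      \<bar>word_map ?fs w x - word_map ?fs w y\<bar> = prod_list (map ?r w) * \<bar>x - y\<bar>"
    using word_map_dist_bounds[OF nonpos_into scale nonneg(2) w, of x y] by simp
qed

lemma diameter_unperturbed_word_image:
  assumes w: "w \<in> words (length [f1, f2]) n"
  shows "1/2 * prod_list (map ((!) [2/5, 1/3]) w) \<le> diameter (word_map [f1, f2] w ` cplifs_I [f1, f2])
    \<and> diameter (word_map [f1, f2] w ` cplifs_I [f1, f2]) \<le> 1 * prod_list (map ((!) [2/5, 1/3]) w)"
proof -
  let ?g = "word_map [f1, f2] w" and ?p = "prod_list (map ((!) [2/5, 1/3 :: real]) w)"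
  have w': "set w \<subseteq> {..<length [f1, f2]}" using w by (simp add: words_def)
  have "0 \<le> [2/5, 1/3 :: real] ! i" if "i \<in> set w" for i
  proof -
    have "i = 0 \<or> i = 1" using that w' by auto
    then show ?thesis by auto
  qed
  then have "0 \<le> ?p" by (intro prod_list_nonneg) auto
  then have "\<bar>?g 0 - ?g (-1/2)\<bar> \<le> diameter (?g ` {-1/2..1/2})
      \<and> diameter (?g ` {-1/2..1/2}) \<le> ?p * (1/2 - (-1/2))"
    using unperturbed_word_map_dist_bounds(1)[OF w'] by (intro diameter_image_interval_bounds) auto
  moreover have "\<bar>?g 0 - ?g (-1/2)\<bar> = ?p * 1/2"
    using unperturbed_word_map_dist_bounds(2)[OF w', of 0 "-1/2"] by simp
  ultimately show ?thesis unfolding cplifs_I_unperturbed by simp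
qed

lemma natural_dim_unperturbed_gt:
  assumes root: "(1/3) powr s0 + (1/5) powr s0 = 1"
  shows "s0 < natural_dim [f1, f2]"
proof -
  let ?P = "\<lambda>s. (2/5) powr s + (1/3 :: real) powr s"
  have "\<exists>s\<ge>0. s \<le> 1 \<and> ?P s = 1"
    by (intro IVT2) (auto intro!: continuous_intros)
  then obtain s1 where "0 \<le> s1" "?P s1 = 1" by blast
  have "natural_dim [f1, f2] = s1"
  proof (rule natural_dim_eqI)
    let ?r = "(!) [2/5, 1/3 :: real]"
    show "nat_pressure [f1, f2] s = ereal (ln (\<Sum>i<length [f1, f2]. ?r i powr s))" for s
      using diameter_unperturbed_word_image
      by (intro nat_pressure_eq_ln_sum_powr[where c="1/2" and C=1]) (auto simp: less_Suc_eq)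
    show "i < length [f1, f2] \<Longrightarrow> 0 < ?r i \<and> ?r i < 1" for i
      by (auto simp: less_Suc_eq)
    show "(\<Sum>i<length [f1, f2]. ?r i powr s1) = 1"
      using \<open>?P s1 = 1\<close> by simp
  qed simp
  moreover have "s0 < s1"
  proof (rule ccontr)
    assume "\<not> s0 < s1"
    have "i \<in> {0, 1} \<Longrightarrow> 0 < [1/5, 1/3 :: real] ! i \<and> [1/5, 1/3 :: real] ! i < 1" for i
      by auto
    then have "s1 < s0 \<Longrightarrow> (1/5) powr s0 + (1/3) powr s0 < (1/5 :: real) powr s1 + (1/3) powr s1"
      using sum_powr_strict_antimono[of "{0, 1 :: nat}" "(!) [1/5, 1/3]" s1 s0] by simp
    then have "(1/5) powr s0 + (1/3) powr s0 \<le> (1/5 :: real) powr s1 + (1/3) powr s1"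
      using \<open>\<not> s0 < s1\<close> by (cases "s0 = s1") auto
    moreover have "0 < s1" using \<open>0 \<le> s1\<close> \<open>?P s1 = 1\<close> by (cases "s1 = 0") auto
    then have "(1/5 :: real) powr s1 < (2/5) powr s1" by (intro powr_less_mono2) auto
    ultimately show False using root \<open>?P s1 = 1\<close> by linarith
  qed
  ultimately show ?thesis by simp
qed

theorem mainTheorem6:
  fixes s0 :: real
  assumes "s0 > 0" and "(1/3) powr s0 + (1/5) powr s0 = 1"
  shows "(\<forall>\<epsilon>>0. natural_dim [(\<lambda>x::real. if x < 0 then 2/5 * x else 1/5 * x),
                                (\<lambda>x. 1/3 * x + \<epsilon>)] = s0)
       \<and> natural_dim [(\<lambda>x::real. if x < 0 then 2/5 * x else 1/5 * x), (\<lambda>x. 1/3 * x)] > s0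
       \<and> \<not> ((\<lambda>\<epsilon>. natural_dim [(\<lambda>x::real. if x < 0 then 2/5 * x else 1/5 * x),
                                (\<lambda>x. 1/3 * x + \<epsilon>)])
            \<longlongrightarrow> natural_dim [(\<lambda>x::real. if x < 0 then 2/5 * x else 1/5 * x), (\<lambda>x. 1/3 * x)])
           (at_right 0)"
proof (intro conjI)
  show perturbed: "\<forall>\<epsilon>>0. natural_dim [f1, f2_shift \<epsilon>] = s0"
    using natural_dim_perturbed[OF _ assms(2)] by blast
  show gt: "s0 < natural_dim [f1, f2]"
    by (rule natural_dim_unperturbed_gt[OF assms(2)])
  have "eventually (\<lambda>\<epsilon>. natural_dim [f1, f2_shift \<epsilon>] = s0) (at_right 0)"
    using eventually_at_right_less[of 0] by (rule eventually_mono) (use perturbed in blast)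
  then have lim_s0: "((\<lambda>\<epsilon>. natural_dim [f1, f2_shift \<epsilon>]) \<longlongrightarrow> s0) (at_right 0)"
    by (rule tendsto_eventually)
  show "\<not> ((\<lambda>\<epsilon>. natural_dim [f1, f2_shift \<epsilon>]) \<longlongrightarrow> natural_dim [f1, f2]) (at_right 0)"
  proof
    assume "((\<lambda>\<epsilon>. natural_dim [f1, f2_shift \<epsilon>]) \<longlongrightarrow> natural_dim [f1, f2]) (at_right 0)"
    then have "natural_dim [f1, f2] = s0"
      using lim_s0 by (rule tendsto_unique[OF trivial_limit_at_right_real])
    then show False using gt by simp
  qed
qed

end
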